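(* For every even $n\ge 6$ there exist Boolean bent functions $f,f'\colon\mathbb F_2^n\to\mathbb F_2$ that are not extended-affine equivalent but whose translation designs $\operatorname{dev}(G_f)$ and $\operatorname{dev}(G_{f'})$ are isomorphic. (Hence, for Boolean bent functions, isomorphism of the designs $\operatorname{dev}(G_f)$ is a strictly coarser equivalence relation than EA-equivalence for every even $n\ge6$.)
   Context: A Boolean function $f\colon\mathbb F_2^n\to\mathbb F_2$ ($n$ even) is bent if $\sum_{\mathbf x}(-1)^{f(\mathbf x)\oplus\langle\mathbf a,\mathbf x\rangle}=\pm2^{n/2}$ for all $\mathbf a\in\mathbb F_2^n$. Boolean functions $f,f'$ are EA-equivalent if $f=f'\circ A_2\oplus A_3$ for an affine permutation $A_2$ of $\mathbb F_2^n$ and an affine function $A_3\colon\mathbb F_2^n\to\mathbb F_2$. $G_f=\{(\mathbf x,f(\mathbf x))\}\subseteq\mathbb F_2^n\times\mathbb F_2$ is the graph of $f$; $\operatorname{dev}(A)$ denotes the incidence structure with point set the ambient group and blocks all translates $A+g$. Two incidence structures with incidence matrices $M,M'$ are isomorphic if $M=PM'Q$ for permutation matrices $P,Q$. *)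

theory Defs
  imports Main
begin

text \<open>Vectors of F_2^n are represented as bool lists of length n (True = 1).\<close>

definition vecs :: "nat \<Rightarrow> bool list set" where
  "vecs n = {x. length x = n}"

definition vadd :: "bool list \<Rightarrow> bool list \<Rightarrow> bool list" where
  "vadd x y = map2 (\<lambda>a b. a \<noteq> b) x y"

definition ip :: "bool list \<Rightarrow> bool list \<Rightarrow> bool" where
  "ip x y = odd (length (filter id (map2 (\<and>) x y)))"

definition sgn2 :: "bool \<Rightarrow> int" where
  "sgn2 b = (if b then -1 else 1)"

definition bent :: "nat \<Rightarrow> (bool list \<Rightarrow> bool) \<Rightarrow> bool" where
  "bent n f \<longleftrightarrow> (\<forall>a\<in>vecs n.
     (\<Sum>x\<in>vecs n. sgn2 (f x \<noteq> ip a x)) = 2 ^ (n div 2) \<or>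
     (\<Sum>x\<in>vecs n. sgn2 (f x \<noteq> ip a x)) = - (2 ^ (n div 2)))"

definition linear_map :: "nat \<Rightarrow> (bool list \<Rightarrow> bool list) \<Rightarrow> bool" where
  "linear_map n L \<longleftrightarrow> (\<forall>x\<in>vecs n. L x \<in> vecs n) \<and>
     (\<forall>x\<in>vecs n. \<forall>y\<in>vecs n. L (vadd x y) = vadd (L x) (L y))"

definition affine_perm :: "nat \<Rightarrow> (bool list \<Rightarrow> bool list) \<Rightarrow> bool" where
  "affine_perm n A \<longleftrightarrow> bij_betw A (vecs n) (vecs n) \<and>
     (\<exists>L b. linear_map n L \<and> b \<in> vecs n \<and> (\<forall>x\<in>vecs n. A x = vadd (L x) b))"

definition affine_fun :: "nat \<Rightarrow> (bool list \<Rightarrow> bool) \<Rightarrow> bool" where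
  "affine_fun n g \<longleftrightarrow> (\<exists>a\<in>vecs n. \<exists>c. \<forall>x\<in>vecs n. g x = (ip a x \<noteq> c))"

definition EA_equiv :: "nat \<Rightarrow> (bool list \<Rightarrow> bool) \<Rightarrow> (bool list \<Rightarrow> bool) \<Rightarrow> bool" where
  "EA_equiv n f f' \<longleftrightarrow> (\<exists>A2 A3. affine_perm n A2 \<and> affine_fun n A3 \<and>
     (\<forall>x\<in>vecs n. f x = (f' (A2 x) \<noteq> A3 x)))"

definition graph :: "nat \<Rightarrow> (bool list \<Rightarrow> bool) \<Rightarrow> bool list set" where
  "graph n f = {x @ [f x] | x. x \<in> vecs n}"

definition dev_points :: "nat \<Rightarrow> bool list set" where
  "dev_points m = vecs m"

definition dev_blocks :: "nat \<Rightarrow> bool list set \<Rightarrow> bool list set set" where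
  "dev_blocks m A = {(\<lambda>a. vadd a g) ` A | g. g \<in> vecs m}"

text \<open>Isomorphism of incidence structures (points, blocks, membership incidence):
  M = P M' Q for permutation matrices P, Q.\<close>
definition inc_iso :: "'p set \<Rightarrow> 'p set set \<Rightarrow> 'p set \<Rightarrow> 'p set set \<Rightarrow> bool" where
  "inc_iso P B P' B' \<longleftrightarrow> (\<exists>\<phi> \<psi>. bij_betw \<phi> P P' \<and> bij_betw \<psi> B B' \<and>
     (\<forall>p\<in>P. \<forall>b\<in>B. p \<in> b \<longleftrightarrow> \<phi> p \<in> \<psi> b))"

end

theory Submission
  imports Defs
begin

text \<open>
  Both functions are Maiorana--McFarland bent functions on \<open>F\<^sub>2\<^sup>m \<times> F\<^sub>2\<^sup>m\<close>, \<open>m = n/2\<close>: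
  \<open>f'(x, y) = x \<cdot> y\<close> and \<open>f(x, y) = x \<cdot> y + x\<^sub>0x\<^sub>1x\<^sub>2\<close>. With \<open>s(x) = (x\<^sub>1x\<^sub>2, x\<^sub>0x\<^sub>2, x\<^sub>0x\<^sub>1, 0, \<dots>)\<close>
  one has \<open>(x + a) \<cdot> (s(x) + s(a)) = (x+a)\<^sub>0(x+a)\<^sub>1(x+a)\<^sub>2\<close>, so the involution
  \<open>(x, y, z) \<mapsto> (x, y + s(x), z)\<close> of \<open>F\<^sub>2\<^sup>n\<^sup>+\<^sup>1\<close> maps every translate of the graph of \<open>f\<close> onto a
  translate of the graph of \<open>f'\<close>, and the two translation designs are isomorphic.
  On the other hand EA-equivalence preserves the property that all second derivatives
  \<open>D\<^sub>uD\<^sub>w\<close> are constant; this holds for the quadratic \<open>f'\<close> but fails for the cubic \<open>f\<close>.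
\<close>

section \<open>Arithmetic in \<open>F\<^sub>2\<^sup>n\<close>\<close>

lemma vecs_iff [simp]: "x \<in> vecs n \<longleftrightarrow> length x = n"
  by (simp add: vecs_def)

lemma finite_vecs [simp]: "finite (vecs n)"
  using finite_lists_length_eq[of "UNIV :: bool set" n] by (simp add: vecs_def)

lemma vadd_Nil [simp]: "vadd [] y = []" "vadd x [] = []"
  by (auto simp: vadd_def)

lemma vadd_Cons [simp]: "vadd (a # x) (b # y) = (a \<noteq> b) # vadd x y"
  by (simp add: vadd_def)

lemma length_vadd [simp]: "length (vadd x y) = min (length x) (length y)"
  by (simp add: vadd_def)

lemma vadd_append: "length x1 = length y1 \<Longrightarrow> vadd (x1 @ x2) (y1 @ y2) = vadd x1 y1 @ vadd x2 y2"
  by (simp add: vadd_def)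

lemma take_vadd: "take k (vadd x y) = vadd (take k x) (take k y)"
  by (simp add: vadd_def take_map take_zip)

lemma drop_vadd: "drop k (vadd x y) = vadd (drop k x) (drop k y)"
  by (simp add: vadd_def drop_map drop_zip)

lemma vadd_comm: "vadd x y = vadd y x"
proof (induction x arbitrary: y)
  case (Cons a x) then show ?case by (cases y) auto
qed simp

lemma vadd_assoc: "vadd (vadd x y) z = vadd x (vadd y z)"
proof (induction x arbitrary: y z)
  case (Cons a x) then show ?case by (cases y; cases z) auto
qed simp

lemma vadd_self: "vadd x x = replicate (length x) False"
  by (induction x) auto

lemma vadd_zero [simp]: "vadd x (replicate (length x) False) = x"
  by (induction x) auto

lemma vadd_vadd_cancel: "length x = length y \<Longrightarrow> vadd (vadd x y) y = x"
  by (metis vadd_assoc vadd_self vadd_zero)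

lemma vadd_eq_zero_iff: "length x = length y \<Longrightarrow> vadd x y = replicate (length x) False \<longleftrightarrow> x = y"
proof (induction x arbitrary: y)
  case (Cons a x) then show ?case by (cases y) auto
qed simp

lemma ip_Nil [simp]: "ip [] y = False" "ip x [] = False"
  by (auto simp: ip_def)

lemma ip_Cons [simp]: "ip (a # x) (b # y) = ((a \<and> b) \<noteq> ip x y)"
  by (auto simp: ip_def)

lemma ip_append: "length x1 = length y1 \<Longrightarrow> ip (x1 @ x2) (y1 @ y2) = (ip x1 y1 \<noteq> ip x2 y2)"
  by (simp add: ip_def)

lemma ip_comm: "ip x y = ip y x"
proof (induction x arbitrary: y)
  case (Cons a x) then show ?case by (cases y) auto
qed simp

lemma ip_vadd_left: "length x = length y \<Longrightarrow> ip (vadd x y) z = (ip x z \<noteq> ip y z)"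
proof (induction x arbitrary: y z)
  case (Cons a x) then show ?case by (cases y; cases z) auto
qed simp

lemma ip_vadd_right: "length x = length y \<Longrightarrow> ip z (vadd x y) = (ip z x \<noteq> ip z y)"
  using ip_vadd_left ip_comm by metis

section \<open>Character sums\<close>

lemma sgn2_xor: "sgn2 (a \<noteq> b) = sgn2 a * sgn2 b"
  by (simp add: sgn2_def)

lemma sum_vecs_Suc:
  "(\<Sum>v\<in>vecs (Suc m). h v) = (\<Sum>y\<in>vecs m. h (True # y)) + (\<Sum>y\<in>vecs m. h (False # y))"
proof -
  have "vecs (Suc m) = Cons True ` vecs m \<union> Cons False ` vecs m"
    by (auto simp: vecs_def length_Suc_conv image_iff)
  then show ?thesis
    by (simp only:) (subst sum.union_disjoint; auto simp: sum.reindex)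
qed

lemma sum_vecs_add: "(\<Sum>v\<in>vecs (a + b). h v) = (\<Sum>x\<in>vecs a. \<Sum>y\<in>vecs b. h (x @ y))"
proof -
  have "vecs (a + b) = (\<lambda>(x, y). x @ y) ` (vecs a \<times> vecs b)"
    by (auto intro!: image_eqI[where x = "(take a v, drop a v)" for v])
  moreover have "inj_on (\<lambda>(x, y). x @ y) (vecs a \<times> vecs b)"
    by (auto simp: inj_on_def)
  ultimately show ?thesis
    by (simp add: sum.reindex sum.cartesian_product split_def)
qed

lemma sum_sgn2_ip:
  "length c = m \<Longrightarrow> (\<Sum>y\<in>vecs m. sgn2 (ip c y)) = (if c = replicate m False then 2 ^ m else 0)"
proof (induction m arbitrary: c)
  case 0 then show ?case by (simp add: sgn2_def vecs_def)
next
  case (Suc m)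
  then obtain c0 c' where c: "c = c0 # c'" "length c' = m"
    by (cases c) auto
  have "(\<Sum>y\<in>vecs (Suc m). sgn2 (ip c y))
      = sgn2 c0 * (\<Sum>y\<in>vecs m. sgn2 (ip c' y)) + (\<Sum>y\<in>vecs m. sgn2 (ip c' y))"
    unfolding sum_vecs_Suc c(1) ip_Cons sgn2_xor by (simp add: sum_distrib_left sgn2_def)
  then show ?case
    using Suc.IH[OF c(2)] c by (cases c0) (auto simp: sgn2_def)
qed

section \<open>Maiorana--McFarland bent functions\<close>

definition maiorana_mcfarland :: "nat \<Rightarrow> (bool list \<Rightarrow> bool) \<Rightarrow> bool list \<Rightarrow> bool" where
  "maiorana_mcfarland m g v = (ip (take m v) (drop m v) \<noteq> g (take m v))"

lemma maiorana_mcfarland_append: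
  "length x = m \<Longrightarrow> maiorana_mcfarland m g (x @ y) = (ip x y \<noteq> g x)"
  by (simp add: maiorana_mcfarland_def)

lemma walsh_maiorana_mcfarland:
  assumes "length \<alpha> = m" "length \<beta> = m"
  shows "(\<Sum>v\<in>vecs (m + m). sgn2 (maiorana_mcfarland m g v \<noteq> ip (\<alpha> @ \<beta>) v))
       = sgn2 (g \<beta> \<noteq> ip \<alpha> \<beta>) * 2 ^ m"
proof -
  have inner: "(\<Sum>y\<in>vecs m. sgn2 (maiorana_mcfarland m g (x @ y) \<noteq> ip (\<alpha> @ \<beta>) (x @ y)))
      = (if x = \<beta> then sgn2 (g \<beta> \<noteq> ip \<alpha> \<beta>) * 2 ^ m else 0)" if x: "length x = m" for x
  proof -
    have "sgn2 (maiorana_mcfarland m g (x @ y) \<noteq> ip (\<alpha> @ \<beta>) (x @ y))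
        = sgn2 (g x \<noteq> ip \<alpha> x) * sgn2 (ip (vadd x \<beta>) y)" if "length y = m" for y
      using assms x that
      by (simp add: maiorana_mcfarland_append ip_append ip_vadd_left) (auto simp: sgn2_def)
    then have "(\<Sum>y\<in>vecs m. sgn2 (maiorana_mcfarland m g (x @ y) \<noteq> ip (\<alpha> @ \<beta>) (x @ y)))
        = sgn2 (g x \<noteq> ip \<alpha> x) * (\<Sum>y\<in>vecs m. sgn2 (ip (vadd x \<beta>) y))"
      by (simp add: sum_distrib_left)
    then show ?thesis
      using sum_sgn2_ip[of "vadd x \<beta>" m] vadd_eq_zero_iff[of x \<beta>] assms x by simp
  qed
  have "(\<Sum>v\<in>vecs (m + m). sgn2 (maiorana_mcfarland m g v \<noteq> ip (\<alpha> @ \<beta>) v))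
      = (\<Sum>x\<in>vecs m. if x = \<beta> then sgn2 (g \<beta> \<noteq> ip \<alpha> \<beta>) * 2 ^ m else 0)"
    unfolding sum_vecs_add by (intro sum.cong refl) (rule inner, simp)
  then show ?thesis
    using assms by simp
qed

lemma bent_maiorana_mcfarland: "bent (m + m) (maiorana_mcfarland m g)"
  unfolding bent_def
proof
  fix a :: "bool list"
  assume "a \<in> vecs (m + m)"
  then have "a = take m a @ drop m a" "length (take m a) = m" "length (drop m a) = m"
    by auto
  then show "(\<Sum>x\<in>vecs (m + m). sgn2 (maiorana_mcfarland m g x \<noteq> ip a x)) = 2 ^ ((m + m) div 2) \<or>
      (\<Sum>x\<in>vecs (m + m). sgn2 (maiorana_mcfarland m g x \<noteq> ip a x)) = - (2 ^ ((m + m) div 2))"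
    using walsh_maiorana_mcfarland[of "take m a" m "drop m a" g] by (simp add: sgn2_def)
qed

section \<open>Isomorphic translation designs\<close>

lemma translate_eq:
  assumes "G \<subseteq> vecs N" "length h = N"
  shows "(\<lambda>a. vadd a h) ` G = {p \<in> vecs N. vadd p h \<in> G}"
proof (rule set_eqI, rule iffI)
  fix p
  assume "p \<in> (\<lambda>a. vadd a h) ` G"
  then obtain a where "a \<in> G" "p = vadd a h"
    by blast
  then show "p \<in> {p \<in> vecs N. vadd p h \<in> G}"
    using assms by (auto simp: vadd_vadd_cancel)
next
  fix p
  assume "p \<in> {p \<in> vecs N. vadd p h \<in> G}"
  then have "vadd p h \<in> G" "p = vadd (vadd p h) h"
    using assms by (auto simp: vadd_vadd_cancel)
  then show "p \<in> (\<lambda>a. vadd a h) ` G"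
    by blast
qed

lemma bij_image_translate:
  assumes \<phi>: "bij_betw \<phi> (vecs N) (vecs N)" and G: "G \<subseteq> vecs N" and G': "G' \<subseteq> vecs N"
    and incidence: "\<And>p h. length p = N \<Longrightarrow> length h = N \<Longrightarrow>
                       vadd p h \<in> G \<longleftrightarrow> vadd (\<phi> p) (\<phi> h) \<in> G'"
    and h: "length h = N"
  shows "\<phi> ` ((\<lambda>a. vadd a h) ` G) = (\<lambda>a. vadd a (\<phi> h)) ` G'"
proof -
  have surj: "\<phi> ` vecs N = vecs N"
    using \<phi> by (simp add: bij_betw_def)
  have "\<phi> ` {p \<in> vecs N. vadd p h \<in> G} = {q \<in> vecs N. vadd q (\<phi> h) \<in> G'}"
  proof (intro equalityI subsetI)
    fix q
    assume "q \<in> \<phi> ` {p \<in> vecs N. vadd p h \<in> G}"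
    then obtain p where "length p = N" "vadd p h \<in> G" "q = \<phi> p"
      by auto
    then show "q \<in> {q \<in> vecs N. vadd q (\<phi> h) \<in> G'}"
      using incidence h surj by auto
  next
    fix q
    assume q: "q \<in> {q \<in> vecs N. vadd q (\<phi> h) \<in> G'}"
    then obtain p where "length p = N" "q = \<phi> p"
      using surj by (metis (no_types, lifting) imageE mem_Collect_eq vecs_iff)
    then show "q \<in> \<phi> ` {p \<in> vecs N. vadd p h \<in> G}"
      using q incidence h by auto
  qed
  moreover have "length (\<phi> h) = N"
    using h surj by auto
  ultimately show ?thesis
    using translate_eq[OF G h] translate_eq[OF G', of "\<phi> h"] by simp
qed

lemma inc_iso_dev_blocks:
  assumes \<phi>: "bij_betw \<phi> (vecs N) (vecs N)" and G: "G \<subseteq> vecs N" and G': "G' \<subseteq> vecs N"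
    and incidence: "\<And>p h. length p = N \<Longrightarrow> length h = N \<Longrightarrow>
                       vadd p h \<in> G \<longleftrightarrow> vadd (\<phi> p) (\<phi> h) \<in> G'"
  shows "inc_iso (dev_points N) (dev_blocks N G) (dev_points N) (dev_blocks N G')"
proof -
  have inj: "inj_on \<phi> (vecs N)" and surj: "\<phi> ` vecs N = vecs N"
    using \<phi> by (auto simp: bij_betw_def)
  have length_\<phi>: "length (\<phi> h) = N" if "length h = N" for h
    using that surj by auto
  have translate: "\<phi> ` ((\<lambda>a. vadd a h) ` G) = (\<lambda>a. vadd a (\<phi> h)) ` G'" if "length h = N" for h
    by (rule bij_image_translate[OF \<phi> G G' _ that]) (fact incidence)
  have blocks_subset: "B \<subseteq> vecs N" if "B \<in> dev_blocks N G" for B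
    using that G by (auto simp: dev_blocks_def)
  have "image \<phi> ` dev_blocks N G = dev_blocks N G'"
  proof (intro equalityI subsetI)
    fix B'
    assume "B' \<in> image \<phi> ` dev_blocks N G"
    then obtain h where h: "length h = N" "B' = \<phi> ` ((\<lambda>a. vadd a h) ` G)"
      by (auto simp: dev_blocks_def)
    then have "B' = (\<lambda>a. vadd a (\<phi> h)) ` G'"
      using translate h by simp
    then show "B' \<in> dev_blocks N G'"
      using length_\<phi>[OF h(1)] by (auto simp: dev_blocks_def)
  next
    fix B'
    assume "B' \<in> dev_blocks N G'"
    then obtain g where g: "g \<in> vecs N" "B' = (\<lambda>a. vadd a g) ` G'"
      by (auto simp: dev_blocks_def)
    obtain h where h: "h \<in> vecs N" "g = \<phi> h"
      using surj g(1) by blast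
    then have "B' = \<phi> ` ((\<lambda>a. vadd a h) ` G)"
      using g(2) translate[of h] by simp
    moreover have "(\<lambda>a. vadd a h) ` G \<in> dev_blocks N G"
      using h(1) by (auto simp: dev_blocks_def)
    ultimately show "B' \<in> image \<phi> ` dev_blocks N G"
      by blast
  qed
  moreover have "inj_on (image \<phi>) (dev_blocks N G)"
    using inj blocks_subset by (simp add: inj_on_def inj_on_image_eq_iff)
  ultimately have "bij_betw (image \<phi>) (dev_blocks N G) (dev_blocks N G')"
    by (simp add: bij_betw_imageI)
  moreover have "p \<in> B \<longleftrightarrow> \<phi> p \<in> \<phi> ` B" if "p \<in> vecs N" "B \<in> dev_blocks N G" for p B
    using inj_on_image_mem_iff[OF inj] that blocks_subset by blast
  ultimately show ?thesis
    unfolding inc_iso_def dev_points_def using \<phi> by blast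
qed

section \<open>The shear relating the two graphs\<close>

fun cubic_monomial :: "bool list \<Rightarrow> bool" where
  "cubic_monomial (x0 # x1 # x2 # _) = (x0 \<and> x1 \<and> x2)"
| "cubic_monomial _ = False"

fun cubic_gradient :: "bool list \<Rightarrow> bool list" where
  "cubic_gradient (x0 # x1 # x2 # r) = (x1 \<and> x2) # (x0 \<and> x2) # (x0 \<and> x1) # replicate (length r) False"
| "cubic_gradient x = replicate (length x) False"

lemma length_cubic_gradient [simp]: "length (cubic_gradient x) = length x"
  by (induction x rule: cubic_gradient.induct) auto

lemma ip_replicate_False [simp]: "ip x (replicate k False) = False"
proof (induction x arbitrary: k)
  case (Cons a x) then show ?case by (cases k) auto
qed simp

lemma ip_vadd_cubic_gradient:
  "length x = length a \<Longrightarrow>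
     ip (vadd x a) (vadd (cubic_gradient x) (cubic_gradient a)) = cubic_monomial (vadd x a)"
  by (cases x rule: cubic_gradient.cases; cases a rule: cubic_gradient.cases) (auto simp: vadd_self)

definition graph_shear :: "nat \<Rightarrow> bool list \<Rightarrow> bool list" where
  "graph_shear m p = vadd p (replicate m False @ cubic_gradient (take m p) @ [False])"

lemma graph_shear_append:
  "length x = m \<Longrightarrow> length y = m \<Longrightarrow> graph_shear m (x @ y @ [z]) = x @ vadd y (cubic_gradient x) @ [z]"
  using vadd_zero[of x] by (simp add: graph_shear_def vadd_append)

lemma split_vecs_graph:
  assumes "length p = m + m + 1"
  obtains x y z where "p = x @ y @ [z]" "length x = m" "length y = m"
proof
  have "p \<noteq> []"
    using assms by auto
  then show "p = take m p @ take m (drop m p) @ [last p]"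
    using assms by (metis append_assoc append_butlast_last_id append_take_drop_id butlast_conv_take
        diff_add_inverse2 take_add)
qed (use assms in auto)

lemma length_graph_shear: "length p = m + m + 1 \<Longrightarrow> length (graph_shear m p) = m + m + 1"
  by (simp add: graph_shear_def)

lemma graph_shear_graph_shear: "length p = m + m + 1 \<Longrightarrow> graph_shear m (graph_shear m p) = p"
  by (elim split_vecs_graph) (simp add: graph_shear_append vadd_vadd_cancel)

lemma bij_graph_shear: "bij_betw (graph_shear m) (vecs (m + m + 1)) (vecs (m + m + 1))"
  by (rule bij_betw_byWitness[where f' = "graph_shear m"]) (auto simp: graph_shear_graph_shear length_graph_shear)

lemma append_mem_graph_iff:
  "length x = m \<Longrightarrow> length y = m \<Longrightarrow> x @ y @ [t] \<in> graph (m + m) f \<longleftrightarrow> f (x @ y) = t"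
  by (auto simp: graph_def)

lemma graph_subset_vecs: "graph n f \<subseteq> vecs (n + 1)"
  by (auto simp: graph_def)

lemma graph_shear_incidence:
  assumes "length p = m + m + 1" "length h = m + m + 1"
  shows "vadd p h \<in> graph (m + m) (maiorana_mcfarland m cubic_monomial) \<longleftrightarrow>
         vadd (graph_shear m p) (graph_shear m h) \<in> graph (m + m) (maiorana_mcfarland m (\<lambda>_. False))"
proof -
  obtain x y z where p: "p = x @ y @ [z]" "length x = m" "length y = m"
    using assms(1) by (rule split_vecs_graph)
  obtain a b c where h: "h = a @ b @ [c]" "length a = m" "length b = m"
    using assms(2) by (rule split_vecs_graph)
  have "vadd (vadd y (cubic_gradient x)) (vadd b (cubic_gradient a))
      = vadd (vadd y b) (vadd (cubic_gradient x) (cubic_gradient a))"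
    by (metis vadd_assoc vadd_comm)
  then have "vadd (graph_shear m p) (graph_shear m h)
      = vadd x a @ vadd (vadd y b) (vadd (cubic_gradient x) (cubic_gradient a)) @ [z \<noteq> c]"
    using p h by (simp add: graph_shear_append vadd_append)
  moreover have "vadd p h = vadd x a @ vadd y b @ [z \<noteq> c]"
    using p h by (simp add: vadd_append)
  ultimately show ?thesis
    using p h ip_vadd_cubic_gradient[of x a]
    by (simp add: append_mem_graph_iff maiorana_mcfarland_append ip_vadd_right)
qed

lemma inc_iso_dev_graph_maiorana_mcfarland_cubic:
  "inc_iso (dev_points (m + m + 1)) (dev_blocks (m + m + 1) (graph (m + m) (maiorana_mcfarland m cubic_monomial)))
           (dev_points (m + m + 1)) (dev_blocks (m + m + 1) (graph (m + m) (maiorana_mcfarland m (\<lambda>_. False))))"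
  by (rule inc_iso_dev_blocks[OF bij_graph_shear graph_subset_vecs graph_subset_vecs graph_shear_incidence])

section \<open>Second derivatives and EA-equivalence\<close>

definition second_derivative :: "(bool list \<Rightarrow> bool) \<Rightarrow> bool list \<Rightarrow> bool list \<Rightarrow> bool list \<Rightarrow> bool" where
  "second_derivative f u w x = ((f x \<noteq> f (vadd x u)) \<noteq> (f (vadd x w) \<noteq> f (vadd (vadd x u) w)))"

text \<open>For Boolean functions this is the same as having algebraic degree at most 2.\<close>

definition constant_second_derivatives :: "nat \<Rightarrow> (bool list \<Rightarrow> bool) \<Rightarrow> bool" where
  "constant_second_derivatives n f \<longleftrightarrow> (\<forall>u\<in>vecs n. \<forall>w\<in>vecs n. \<forall>x\<in>vecs n. \<forall>y\<in>vecs n.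
     second_derivative f u w x = second_derivative f u w y)"

lemma second_derivative_affine_transform:
  assumes L: "linear_map n L" and "length b = n" "length a = n"
    and "length u = n" "length w = n" "length x = n"
  shows "second_derivative (\<lambda>x. f (vadd (L x) b) \<noteq> (ip a x \<noteq> c)) u w x
       = second_derivative f (L u) (L w) (vadd (L x) b)"
proof -
  have length_L: "length (L y) = n" if "length y = n" for y
    using L that by (simp add: linear_map_def)
  have L_vadd: "L (vadd y y') = vadd (L y) (L y')" if "length y = n" "length y' = n" for y y'
    using L that by (simp add: linear_map_def)
  have vadd_swap: "vadd (vadd X Y) Z = vadd (vadd X Z) Y" for X Y Z
    by (simp add: vadd_assoc vadd_comm[of Y Z])
  have "vadd (L (vadd x u)) b = vadd (vadd (L x) b) (L u)"
    and "vadd (L (vadd x w)) b = vadd (vadd (L x) b) (L w)"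
    and "vadd (L (vadd (vadd x u) w)) b = vadd (vadd (vadd (L x) b) (L u)) (L w)"
    using assms by (simp_all add: L_vadd length_L vadd_swap)
  moreover have "ip a (vadd x u) = (ip a x \<noteq> ip a u)" "ip a (vadd x w) = (ip a x \<noteq> ip a w)"
    "ip a (vadd (vadd x u) w) = ((ip a x \<noteq> ip a u) \<noteq> ip a w)"
    using assms by (simp_all add: ip_vadd_right)
  ultimately show ?thesis
    unfolding second_derivative_def by simp argo
qed

lemma second_derivative_cong:
  assumes "\<forall>y\<in>vecs n. f y = g y" "length u = n" "length w = n" "length x = n"
  shows "second_derivative f u w x = second_derivative g u w x"
  using assms by (simp add: second_derivative_def)

lemma EA_equiv_constant_second_derivatives:
  assumes "EA_equiv n f f'" "constant_second_derivatives n f'"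
  shows "constant_second_derivatives n f"
proof -
  obtain A2 A3 where A2: "affine_perm n A2" and A3: "affine_fun n A3"
    and f: "\<forall>x\<in>vecs n. f x = (f' (A2 x) \<noteq> A3 x)"
    using assms(1) unfolding EA_equiv_def by blast
  obtain L b where L: "linear_map n L" and b: "length b = n" and A2_eq: "\<forall>x\<in>vecs n. A2 x = vadd (L x) b"
    using A2 unfolding affine_perm_def by auto
  obtain a c where "a \<in> vecs n" and A3_eq: "\<forall>x\<in>vecs n. A3 x = (ip a x \<noteq> c)"
    using A3 unfolding affine_fun_def by blast
  then have a: "length a = n"
    by simp
  have length_L: "length (L y) = n" if "length y = n" for y
    using L that by (simp add: linear_map_def)
  have f_eq: "\<forall>y\<in>vecs n. f y = (f' (vadd (L y) b) \<noteq> (ip a y \<noteq> c))"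
  proof
    fix y
    assume "y \<in> vecs n"
    then show "f y = (f' (vadd (L y) b) \<noteq> (ip a y \<noteq> c))"
      using bspec[OF f] bspec[OF A2_eq] bspec[OF A3_eq] by simp
  qed
  have transform: "second_derivative f u w x = second_derivative f' (L u) (L w) (vadd (L x) b)"
    if "length u = n" "length w = n" "length x = n" for u w x
    using second_derivative_cong[OF f_eq that] second_derivative_affine_transform[OF L b a that]
    by (rule trans)
  have f'_const: "second_derivative f' u w x = second_derivative f' u w y"
    if "length u = n" "length w = n" "length x = n" "length y = n" for u w x y
    using that by (intro assms(2)[unfolded constant_second_derivatives_def, rule_format]) simp_all
  show ?thesis
    unfolding constant_second_derivatives_def
  proof (intro ballI)
    fix u w x y :: "bool list"
    assume "u \<in> vecs n" "w \<in> vecs n" "x \<in> vecs n" "y \<in> vecs n"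
    then have uwxy: "length u = n" "length w = n" "length x = n" "length y = n"
      by simp_all
    then have "second_derivative f u w x = second_derivative f' (L u) (L w) (vadd (L x) b)"
      by (simp add: transform)
    also have "\<dots> = second_derivative f' (L u) (L w) (vadd (L y) b)"
      using uwxy length_L b by (intro f'_const) simp_all
    also have "\<dots> = second_derivative f u w y"
      using uwxy by (simp add: transform)
    finally show "second_derivative f u w x = second_derivative f u w y" .
  qed
qed

lemma second_derivative_inner_product:
  assumes "length x = m + m" "length u = m + m" "length w = m + m"
  shows "second_derivative (maiorana_mcfarland m (\<lambda>_. False)) u w x
       = (ip (take m u) (drop m w) \<noteq> ip (take m w) (drop m u))"
  using assms
  by (simp add: second_derivative_def maiorana_mcfarland_def take_vadd drop_vadd ip_vadd_left ip_vadd_right)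
    argo

lemma constant_second_derivatives_inner_product:
  "constant_second_derivatives (m + m) (maiorana_mcfarland m (\<lambda>_. False))"
  by (simp add: constant_second_derivatives_def second_derivative_inner_product)

lemma not_constant_second_derivatives_cubic:
  assumes "3 \<le> m"
  shows "\<not> constant_second_derivatives (m + m) (maiorana_mcfarland m cubic_monomial)"
proof -
  define e where "e b0 b1 b2 = (b0 # b1 # b2 # replicate (m - 3) False) @ replicate m False" for b0 b1 b2
  have length_e: "length (e b0 b1 b2) = m + m" for b0 b1 b2
    using assms by (simp add: e_def)
  have vadd_e: "vadd (e a0 a1 a2) (e b0 b1 b2) = e (a0 \<noteq> b0) (a1 \<noteq> b1) (a2 \<noteq> b2)" for a0 a1 a2 b0 b1 b2
    by (simp add: e_def vadd_append vadd_self replicate_add)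
  have "maiorana_mcfarland m cubic_monomial (e b0 b1 b2) = (b0 \<and> b1 \<and> b2)" for b0 b1 b2
    using assms by (auto simp: e_def maiorana_mcfarland_append simp del: append_Cons)
  then have derivative: "second_derivative (maiorana_mcfarland m cubic_monomial)
      (e True False False) (e False True False) (e False False b) = b" for b
    by (simp add: second_derivative_def vadd_e)
  show ?thesis
  proof
    assume "constant_second_derivatives (m + m) (maiorana_mcfarland m cubic_monomial)"
    then show False
      using derivative length_e unfolding constant_second_derivatives_def
      by (metis (full_types) vecs_iff)
  qed
qed

lemma not_EA_equiv_maiorana_mcfarland_cubic:
  "3 \<le> m \<Longrightarrow> \<not> EA_equiv (m + m) (maiorana_mcfarland m cubic_monomial) (maiorana_mcfarland m (\<lambda>_. False))"
  using EA_equiv_constant_second_derivatives constant_second_derivatives_inner_product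
    not_constant_second_derivatives_cubic by blast

theorem theorem2:
  fixes n :: nat
  assumes "even n" and "n \<ge> 6"
  shows "\<exists>f f'. bent n f \<and> bent n f' \<and> \<not> EA_equiv n f f' \<and>
           inc_iso (dev_points (n+1)) (dev_blocks (n+1) (graph n f))
                   (dev_points (n+1)) (dev_blocks (n+1) (graph n f'))"
proof -
  obtain m where n: "n = m + m"
    using assms(1) by (metis evenE mult_2)
  with assms(2) have "3 \<le> m"
    by simp
  then show ?thesis
    unfolding n
    using bent_maiorana_mcfarland not_EA_equiv_maiorana_mcfarland_cubic
      inc_iso_dev_graph_maiorana_mcfarland_cubic by blast
qed

end
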